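(* (1) There exist a connected undirected unweighted graph $G=(V,E)$ and $\delta>0$ such that the set function $S\mapsto\operatorname{fp}(G^S,\delta)$ on subsets of $V$ is not submodular; moreover, such $G$ and $\delta$ exist also with the additional requirement that every node of $G$ has a self-loop. (2) There exists a connected undirected unweighted graph $G=(V,E)$ such that the set function $S\mapsto\operatorname{fp}^{\infty}(G^S)$ is not submodular.
   Context: Positional Voter model. A graph $G=(V,E,w)$ has node set $V$ with $|V|=n$, edge set $E\subseteq V\times V$ and weights $w\colon E\to\mathbb{R}_{>0}$; $\operatorname{in}(u)=\{v\in V:(v,u)\in E\}$. "Undirected unweighted" means $E$ is symmetric and $w\equiv 1$; "self-loop at $u$" means $(u,u)\in E$. A configuration is a set $X\subseteq V$ (the nodes carrying the novel trait $A$). Given a biased set $S\subseteq V$ and bias $\delta\ge 0$, define $f^S_X(v\mid u)=1+\delta$ if $v\in X$ and $u\in S$, and $1$ otherwise. The process $(\mathcal{X}_t)_{t\ge0}$: given $\mathcal{X}_t=X$, a node $u$ is chosen uniformly at random from $V$, then $v\in\operatorname{in}(u)$ is chosen with probability $\frac{f^S_X(v\mid u)\,w(v,u)}{\sum_{x\in\operatorname{in}(u)} f^S_X(x\mid u)\,w(x,u)}$, and $\mathcal{X}_{t+1}=X\cup\{u\}$ if $v\in X$, $\mathcal{X}_{t+1}=X\setminus\{u\}$ otherwise. Define $\operatorname{fp}(G^S,\delta,X)=\mathbb{P}[\exists t\ge0:\mathcal{X}_t=V\mid\mathcal{X}_0=X]$, $\operatorname{fp}(G^S,\delta)=\frac1n\sum_{u\in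 V}\operatorname{fp}(G^S,\delta,\{u\})$, and $\operatorname{fp}^{\infty}(G^S)=\lim_{\delta\to\infty}\operatorname{fp}(G^S,\delta)$. A set function $f$ on subsets of $V$ is submodular if $f(S_1)+f(S_2)\ge f(S_1\cup S_2)+f(S_1\cap S_2)$ for all $S_1,S_2\subseteq V$. *)

theory Defs
  imports "HOL-Analysis.Analysis"
begin

definition in_nbrs :: "('a \<times> 'a) set \<Rightarrow> 'a \<Rightarrow> 'a set" where
  "in_nbrs E u = {v. (v, u) \<in> E}"

definition fitness :: "'a set \<Rightarrow> real \<Rightarrow> 'a set \<Rightarrow> 'a \<Rightarrow> 'a \<Rightarrow> real" where
  "fitness S \<delta> X v u = (if v \<in> X \<and> u \<in> S then 1 + \<delta> else 1)"

definition copy_prob ::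
  "('a \<times> 'a) set \<Rightarrow> ('a \<times> 'a \<Rightarrow> real) \<Rightarrow> 'a set \<Rightarrow> real \<Rightarrow> 'a set \<Rightarrow> 'a \<Rightarrow> 'a \<Rightarrow> real" where
  "copy_prob E w S \<delta> X u v =
     fitness S \<delta> X v u * w (v, u) / (\<Sum>x\<in>in_nbrs E u. fitness S \<delta> X x u * w (x, u))"

definition next_conf :: "'a set \<Rightarrow> 'a \<Rightarrow> 'a \<Rightarrow> 'a set" where
  "next_conf X u v = (if v \<in> X then insert u X else X - {u})"

text \<open>hit_prob V E w S \<delta> t X = probability that the process started at X visits V
  within the first t steps, i.e. P[\<exists>s\<le>t. X_s = V | X_0 = X].\<close>
fun hit_prob ::
  "'a set \<Rightarrow> ('a \<times> 'a) set \<Rightarrow> ('a \<times> 'a \<Rightarrow> real) \<Rightarrow> 'a set \<Rightarrow> real \<Rightarrow> nat \<Rightarrow> 'a set \<Rightarrow> real" where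
  "hit_prob V E w S \<delta> 0 X = (if X = V then 1 else 0)"
| "hit_prob V E w S \<delta> (Suc t) X =
     (if X = V then 1
      else (\<Sum>u\<in>V. \<Sum>v\<in>in_nbrs E u.
              (1 / real (card V)) * copy_prob E w S \<delta> X u v
                * hit_prob V E w S \<delta> t (next_conf X u v)))"

text \<open>fp(G^S, \<delta>, X) = P[\<exists>t. X_t = V | X_0 = X], the limit of the (monotone)
  finite-horizon hitting probabilities (continuity of the probability measure).\<close>
definition fp_conf ::
  "'a set \<Rightarrow> ('a \<times> 'a) set \<Rightarrow> ('a \<times> 'a \<Rightarrow> real) \<Rightarrow> 'a set \<Rightarrow> real \<Rightarrow> 'a set \<Rightarrow> real" where
  "fp_conf V E w S \<delta> X = lim (\<lambda>t. hit_prob V E w S \<delta> t X)"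

definition fp ::
  "'a set \<Rightarrow> ('a \<times> 'a) set \<Rightarrow> ('a \<times> 'a \<Rightarrow> real) \<Rightarrow> 'a set \<Rightarrow> real \<Rightarrow> real" where
  "fp V E w S \<delta> = (1 / real (card V)) * (\<Sum>u\<in>V. fp_conf V E w S \<delta> {u})"

definition submodular_on :: "'a set \<Rightarrow> ('a set \<Rightarrow> real) \<Rightarrow> bool" where
  "submodular_on V f \<longleftrightarrow>
     (\<forall>S1 S2. S1 \<subseteq> V \<longrightarrow> S2 \<subseteq> V \<longrightarrow> f S1 + f S2 \<ge> f (S1 \<union> S2) + f (S1 \<inter> S2))"

definition undirected_connected_graph :: "'a set \<Rightarrow> ('a \<times> 'a) set \<Rightarrow> bool" where
  "undirected_connected_graph V E \<longleftrightarrow>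
     finite V \<and> V \<noteq> {} \<and> E \<subseteq> V \<times> V \<and> sym E \<and> (\<forall>u\<in>V. \<forall>v\<in>V. (u, v) \<in> E\<^sup>*)"

end

theory Submission
  imports Defs "HOL-Real_Asymp.Real_Asymp"
begin

text \<open>The fixation probability fp(G^S, \<delta>, X) is the unique solution of the first-step
  equations of the chain with boundary values 1 at V and 0 at the empty configuration,
  as soon as every transient configuration is absorbed within one step with probability
  bounded away from 0; so it can be computed by exhibiting such a solution. On the
  triangle, with or without self-loops, the solutions are explicit rational functions
  of \<delta>, and by the symmetry of the triangle fp depends on S only through its size. For
  S1 = {0} and S2 = {1} the explicit values violate submodularity both at \<delta> = 1 and
  in the limit \<delta> \<rightarrow> \<infinity>, where they become 4/9 + 4/9 < 4/7 + 1/3.\<close>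

definition voter_step ::
  "'a set \<Rightarrow> ('a \<times> 'a) set \<Rightarrow> ('a \<times> 'a \<Rightarrow> real) \<Rightarrow> 'a set \<Rightarrow> real \<Rightarrow> ('a set \<Rightarrow> real) \<Rightarrow> 'a set \<Rightarrow> real"
  where
  "voter_step V E w S \<delta> g X =
     (\<Sum>u\<in>V. \<Sum>v\<in>in_nbrs E u. (1 / real (card V)) * copy_prob E w S \<delta> X u v * g (next_conf X u v))"

lemma hit_prob_Suc:
  "hit_prob V E w S \<delta> (Suc t) X =
     (if X = V then 1 else voter_step V E w S \<delta> (hit_prob V E w S \<delta> t) X)"
  by (simp add: voter_step_def)

declare hit_prob.simps(2) [simp del]

lemma hit_prob_full: "hit_prob V E w S \<delta> t V = 1"
  by (cases t) (auto simp: hit_prob_Suc)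

lemma next_conf_empty: "next_conf {} u v = {}"
  by (simp add: next_conf_def)

lemma hit_prob_empty: "V \<noteq> {} \<Longrightarrow> hit_prob V E w S \<delta> t {} = 0"
  by (induction t) (auto simp: hit_prob_Suc voter_step_def next_conf_empty)

lemma next_conf_subset: "X \<subseteq> V \<Longrightarrow> u \<in> V \<Longrightarrow> next_conf X u v \<subseteq> V"
  by (auto simp: next_conf_def)

lemma copy_prob_nonneg:
  assumes "0 \<le> \<delta>" and "\<And>e. 0 \<le> w e"
  shows "0 \<le> copy_prob E w S \<delta> X u v"
proof -
  have fitness: "0 \<le> fitness S \<delta> X x u" for x
    using assms(1) by (simp add: fitness_def)
  then have "0 \<le> (\<Sum>x\<in>in_nbrs E u. fitness S \<delta> X x u * w (x, u))"
    by (intro sum_nonneg mult_nonneg_nonneg assms(2))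
  with fitness show ?thesis
    unfolding copy_prob_def by (intro divide_nonneg_nonneg mult_nonneg_nonneg assms(2))
qed

lemma voter_step_cong:
  assumes "X \<subseteq> V" and "\<And>Y. Y \<subseteq> V \<Longrightarrow> g Y = g' Y"
  shows "voter_step V E w S \<delta> g X = voter_step V E w S \<delta> g' X"
  unfolding voter_step_def using assms by (auto intro!: sum.cong simp: next_conf_subset)

lemma voter_step_diff:
  "voter_step V E w S \<delta> g X - voter_step V E w S \<delta> g' X = voter_step V E w S \<delta> (\<lambda>Y. g Y - g' Y) X"
  by (simp add: voter_step_def sum_subtractf right_diff_distrib)

lemma voter_step_abs_le:
  assumes "0 \<le> \<delta>" and "\<And>e. 0 \<le> w e" and "X \<subseteq> V"
    and bound: "\<And>Y. Y \<subseteq> V \<Longrightarrow> \<bar>g Y\<bar> \<le> M * m Y"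
  shows "\<bar>voter_step V E w S \<delta> g X\<bar> \<le> M * voter_step V E w S \<delta> m X"
proof -
  let ?p = "\<lambda>u v. (1 / real (card V)) * copy_prob E w S \<delta> X u v"
  have p: "0 \<le> ?p u v" for u v
    using copy_prob_nonneg[of \<delta> w, OF assms(1,2)] by simp
  have "\<bar>voter_step V E w S \<delta> g X\<bar> \<le> (\<Sum>u\<in>V. \<Sum>v\<in>in_nbrs E u. \<bar>?p u v * g (next_conf X u v)\<bar>)"
    unfolding voter_step_def by (rule order_trans[OF sum_abs]) (intro sum_mono sum_abs)
  also have "\<dots> \<le> (\<Sum>u\<in>V. \<Sum>v\<in>in_nbrs E u. ?p u v * (M * m (next_conf X u v)))"
  proof (intro sum_mono)
    fix u v
    assume "u \<in> V"
    then have "\<bar>g (next_conf X u v)\<bar> \<le> M * m (next_conf X u v)"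
      using bound next_conf_subset[OF \<open>X \<subseteq> V\<close>] by blast
    then show "\<bar>?p u v * g (next_conf X u v)\<bar> \<le> ?p u v * (M * m (next_conf X u v))"
      by (subst abs_mult, subst abs_of_nonneg[OF p]) (rule mult_left_mono[OF _ p])
  qed
  also have "\<dots> = M * voter_step V E w S \<delta> m X"
    by (simp add: voter_step_def sum_distrib_left mult_ac)
  finally show ?thesis .
qed

text \<open>The distance between h and the hitting probabilities within t steps is supported on
  transient configurations and contracts by the factor q in every step.\<close>
lemma fp_conf_eqI:
  fixes h :: "'a set \<Rightarrow> real"
  assumes "finite V" and "V \<noteq> {}" and "0 \<le> \<delta>" and "\<And>e. 0 \<le> w e"
    and "0 \<le> q" and "q < 1"
    and h_full: "h V = 1" and h_empty: "h {} = 0"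
    and harmonic: "\<And>X. X \<subseteq> V \<Longrightarrow> X \<noteq> {} \<Longrightarrow> X \<noteq> V \<Longrightarrow> h X = voter_step V E w S \<delta> h X"
    and absorbing: "\<And>X. X \<subseteq> V \<Longrightarrow> X \<noteq> {} \<Longrightarrow> X \<noteq> V \<Longrightarrow>
        voter_step V E w S \<delta> (\<lambda>Y. of_bool (Y \<noteq> {} \<and> Y \<noteq> V)) X \<le> q"
    and "X \<subseteq> V"
  shows "fp_conf V E w S \<delta> X = h X"
proof -
  let ?hit = "hit_prob V E w S \<delta>"
  let ?transient = "\<lambda>Y. of_bool (Y \<noteq> {} \<and> Y \<noteq> V) :: real"
  define K where "K = (\<Sum>Y\<in>Pow V. \<bar>h Y\<bar>)"
  have "0 \<le> K"
    unfolding K_def by (simp add: sum_nonneg)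
  have error: "\<bar>h Y - ?hit t Y\<bar> \<le> K * q ^ t * ?transient Y" if "Y \<subseteq> V" for t Y
    using that
  proof (induction t arbitrary: Y)
    case 0
    then have "\<bar>h Y\<bar> \<le> K"
      unfolding K_def using \<open>finite V\<close> by (intro member_le_sum) auto
    then show ?case
      using h_full h_empty by auto
  next
    case (Suc t)
    show ?case
    proof (cases "Y = {} \<or> Y = V")
      case True
      then show ?thesis
        using h_full h_empty hit_prob_full hit_prob_empty[OF \<open>V \<noteq> {}\<close>] by auto
    next
      case False
      then have "h Y - ?hit (Suc t) Y = voter_step V E w S \<delta> (\<lambda>Z. h Z - ?hit t Z) Y"
        using harmonic[OF Suc.prems] by (simp add: hit_prob_Suc voter_step_diff)
      also have "\<bar>\<dots>\<bar> \<le> K * q ^ t * voter_step V E w S \<delta> ?transient Y"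
        using Suc by (intro voter_step_abs_le assms(3,4))
      also have "\<dots> \<le> K * q ^ t * q"
        using absorbing[OF Suc.prems] False \<open>0 \<le> K\<close> \<open>0 \<le> q\<close> by (intro mult_left_mono) auto
      also have "\<dots> = K * q ^ Suc t * ?transient Y"
        using False by (simp add: power_Suc2 mult.assoc)
      finally show ?thesis .
    qed
  qed
  have decay: "(\<lambda>t. K * q ^ t) \<longlonglongrightarrow> 0"
    using \<open>0 \<le> q\<close> \<open>q < 1\<close> by (intro tendsto_mult_right_zero LIMSEQ_power_zero) simp
  have bound: "\<bar>?hit t X - h X\<bar> \<le> K * q ^ t" for t
  proof -
    have "K * q ^ t * ?transient X \<le> K * q ^ t"
      using \<open>0 \<le> K\<close> \<open>0 \<le> q\<close> by (intro mult_left_le) auto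
    with error[OF \<open>X \<subseteq> V\<close>, of t] show ?thesis
      by (simp add: abs_minus_commute)
  qed
  have "(\<lambda>t. ?hit t X - h X) \<longlonglongrightarrow> 0"
    by (rule Lim_null_comparison[OF always_eventually decay]) (simp add: bound)
  then have "(\<lambda>t. ?hit t X) \<longlonglongrightarrow> h X"
    by (simp add: LIM_zero_iff)
  then show ?thesis
    unfolding fp_conf_def by (rule limI)
qed

definition graph_automorphism ::
  "'a set \<Rightarrow> ('a \<times> 'a) set \<Rightarrow> ('a \<times> 'a \<Rightarrow> real) \<Rightarrow> ('a \<Rightarrow> 'a) \<Rightarrow> bool" where
  "graph_automorphism V E w \<pi> \<longleftrightarrow> bij_betw \<pi> V V \<and>
     (\<forall>u\<in>V. \<forall>v\<in>V. ((\<pi> u, \<pi> v) \<in> E \<longleftrightarrow> (u, v) \<in> E) \<and> w (\<pi> u, \<pi> v) = w (u, v))"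

lemma in_nbrs_automorphism:
  assumes aut: "graph_automorphism V E w \<pi>" and E: "E \<subseteq> V \<times> V" and "u \<in> V"
  shows "in_nbrs E (\<pi> u) = \<pi> ` in_nbrs E u"
proof -
  have edge: "(\<pi> v, \<pi> u) \<in> E \<longleftrightarrow> (v, u) \<in> E" if "v \<in> V" for v
    using aut that \<open>u \<in> V\<close> unfolding graph_automorphism_def by blast
  have "in_nbrs E (\<pi> u) \<subseteq> \<pi> ` V"
    using aut E unfolding graph_automorphism_def bij_betw_def in_nbrs_def by blast
  moreover have "in_nbrs E u \<subseteq> V"
    using E unfolding in_nbrs_def by blast
  ultimately show ?thesis
    using edge unfolding in_nbrs_def by blast
qed

lemma voter_step_automorphism:
  assumes aut: "graph_automorphism V E w \<pi>" and E: "E \<subseteq> V \<times> V"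
    and "S \<subseteq> V" and "X \<subseteq> V"
  shows "voter_step V E w (\<pi> ` S) \<delta> g (\<pi> ` X) = voter_step V E w S \<delta> (\<lambda>Y. g (\<pi> ` Y)) X"
proof -
  have bij: "bij_betw \<pi> V V" and inj: "inj_on \<pi> V"
    using aut bij_betw_imp_inj_on unfolding graph_automorphism_def by blast+
  have nbrs: "in_nbrs E u \<subseteq> V" for u
    using E by (auto simp: in_nbrs_def)
  have sum_nbrs: "(\<Sum>v\<in>in_nbrs E (\<pi> u). f v) = (\<Sum>v\<in>in_nbrs E u. f (\<pi> v))" if "u \<in> V" for u f
    unfolding in_nbrs_automorphism[OF aut E that]
    by (simp add: sum.reindex[OF inj_on_subset[OF inj nbrs]])
  have fitness: "fitness (\<pi> ` S) \<delta> (\<pi> ` X) (\<pi> v) (\<pi> u) = fitness S \<delta> X v u"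
    if "u \<in> V" "v \<in> V" for u v
    using that assms inj by (simp add: fitness_def inj_on_image_mem_iff)
  have copy: "copy_prob E w (\<pi> ` S) \<delta> (\<pi> ` X) (\<pi> u) (\<pi> v) = copy_prob E w S \<delta> X u v"
    if "u \<in> V" "v \<in> V" for u v
  proof -
    have "w (\<pi> x, \<pi> u) = w (x, u)" if "x \<in> V" for x
      using aut that \<open>u \<in> V\<close> unfolding graph_automorphism_def by blast
    then show ?thesis
      using that subsetD[OF nbrs]
      by (auto simp: copy_prob_def sum_nbrs fitness intro!: sum.cong)
  qed
  have next_conf: "next_conf (\<pi> ` X) (\<pi> u) (\<pi> v) = \<pi> ` next_conf X u v"
    if "u \<in> V" "v \<in> V" for u v
    using that assms by (auto simp: next_conf_def inj_on_image_mem_iff dest: inj_onD[OF inj])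
  have "voter_step V E w (\<pi> ` S) \<delta> g (\<pi> ` X) =
      (\<Sum>u\<in>V. \<Sum>v\<in>in_nbrs E (\<pi> u). (1 / real (card V)) * copy_prob E w (\<pi> ` S) \<delta> (\<pi> ` X) (\<pi> u) v
        * g (next_conf (\<pi> ` X) (\<pi> u) v))"
    unfolding voter_step_def by (rule sum.reindex_bij_betw[OF bij, symmetric])
  also have "\<dots> = voter_step V E w S \<delta> (\<lambda>Y. g (\<pi> ` Y)) X"
    unfolding voter_step_def
  proof (rule sum.cong[OF refl])
    fix u
    assume "u \<in> V"
    have "(1 / real (card V)) * copy_prob E w (\<pi> ` S) \<delta> (\<pi> ` X) (\<pi> u) (\<pi> v)
        * g (next_conf (\<pi> ` X) (\<pi> u) (\<pi> v)) =
        (1 / real (card V)) * copy_prob E w S \<delta> X u v * g (\<pi> ` next_conf X u v)"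
      if "v \<in> in_nbrs E u" for v
    proof -
      have "v \<in> V"
        using that nbrs by blast
      with \<open>u \<in> V\<close> show ?thesis
        by (simp add: copy next_conf)
    qed
    then show "(\<Sum>v\<in>in_nbrs E (\<pi> u). (1 / real (card V)) * copy_prob E w (\<pi> ` S) \<delta> (\<pi> ` X) (\<pi> u) v
          * g (next_conf (\<pi> ` X) (\<pi> u) v)) =
        (\<Sum>v\<in>in_nbrs E u. (1 / real (card V)) * copy_prob E w S \<delta> X u v * g (\<pi> ` next_conf X u v))"
      unfolding sum_nbrs[OF \<open>u \<in> V\<close>] by (rule sum.cong[OF refl])
  qed
  finally show ?thesis .
qed

lemma hit_prob_automorphism:
  assumes aut: "graph_automorphism V E w \<pi>" and E: "E \<subseteq> V \<times> V"
    and "S \<subseteq> V" and "X \<subseteq> V"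
  shows "hit_prob V E w (\<pi> ` S) \<delta> t (\<pi> ` X) = hit_prob V E w S \<delta> t X"
proof -
  have full: "\<pi> ` Y = V \<longleftrightarrow> Y = V" if "Y \<subseteq> V" for Y
    using aut that unfolding graph_automorphism_def
    by (metis bij_betw_def inj_on_image_eq_iff order_refl)
  show ?thesis
    using \<open>X \<subseteq> V\<close>
  proof (induction t arbitrary: X)
    case 0
    then show ?case
      using full by simp
  next
    case (Suc t)
    show ?case
    proof (cases "X = V")
      case True
      then show ?thesis
        using full Suc.prems by (simp add: hit_prob_Suc)
    next
      case False
      have "voter_step V E w (\<pi> ` S) \<delta> (hit_prob V E w (\<pi> ` S) \<delta> t) (\<pi> ` X) =
          voter_step V E w S \<delta> (\<lambda>Y. hit_prob V E w (\<pi> ` S) \<delta> t (\<pi> ` Y)) X"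
        by (rule voter_step_automorphism[OF aut E \<open>S \<subseteq> V\<close> Suc.prems])
      also have "\<dots> = voter_step V E w S \<delta> (hit_prob V E w S \<delta> t) X"
        by (rule voter_step_cong[OF Suc.prems Suc.IH])
      finally show ?thesis
        using False full Suc.prems by (simp add: hit_prob_Suc)
    qed
  qed
qed

lemma fp_automorphism:
  assumes aut: "graph_automorphism V E w \<pi>" and E: "E \<subseteq> V \<times> V" and "S \<subseteq> V"
  shows "fp V E w (\<pi> ` S) \<delta> = fp V E w S \<delta>"
proof -
  have bij: "bij_betw \<pi> V V"
    using aut unfolding graph_automorphism_def by blast
  have "fp_conf V E w (\<pi> ` S) \<delta> {\<pi> u} = fp_conf V E w S \<delta> {u}" if "u \<in> V" for u
    using hit_prob_automorphism[OF aut E \<open>S \<subseteq> V\<close>, of "{u}"] that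
    by (simp add: fp_conf_def)
  then show ?thesis
    unfolding fp_def sum.reindex_bij_betw[OF bij, symmetric, of "\<lambda>u. fp_conf V E w (\<pi> ` S) \<delta> {u}"]
    by simp
qed

definition complete_graph :: "'a set \<Rightarrow> ('a \<times> 'a) set" where
  "complete_graph V = {(u, v) \<in> V \<times> V. u \<noteq> v}"

definition complete_graph_with_loops :: "'a set \<Rightarrow> ('a \<times> 'a) set" where
  "complete_graph_with_loops V = V \<times> V"

lemma in_nbrs_complete_graph_with_loops: "u \<in> V \<Longrightarrow> in_nbrs (complete_graph_with_loops V) u = V"
  by (auto simp: in_nbrs_def complete_graph_with_loops_def)

lemma undirected_connected_complete_graph:
  assumes "finite V" and "V \<noteq> {}"
  shows "undirected_connected_graph V (complete_graph V)"
proof -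
  have "(u, v) \<in> (complete_graph V)\<^sup>*" if "u \<in> V" and "v \<in> V" for u v
    using that by (cases "u = v") (simp_all add: complete_graph_def r_into_rtrancl)
  moreover have "complete_graph V \<subseteq> V \<times> V" and "sym (complete_graph V)"
    by (auto simp: complete_graph_def sym_def)
  ultimately show ?thesis
    using assms unfolding undirected_connected_graph_def by blast
qed

lemma undirected_connected_complete_graph_with_loops:
  "finite V \<Longrightarrow> V \<noteq> {} \<Longrightarrow> undirected_connected_graph V (complete_graph_with_loops V)"
  unfolding undirected_connected_graph_def complete_graph_with_loops_def
  by (simp add: sym_def r_into_rtrancl)

lemma automorphism_complete_graph:
  "bij_betw \<pi> V V \<Longrightarrow> graph_automorphism V (complete_graph V) (\<lambda>_. c) \<pi>"
  unfolding graph_automorphism_def complete_graph_def bij_betw_def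
  by (auto simp: inj_on_eq_iff)

lemma automorphism_complete_graph_with_loops:
  "bij_betw \<pi> V V \<Longrightarrow> graph_automorphism V (complete_graph_with_loops V) (\<lambda>_. c) \<pi>"
  unfolding graph_automorphism_def complete_graph_with_loops_def by (auto simp: bij_betw_def)

lemma fp_complete_graph_relabel:
  assumes "bij_betw \<pi> V V" and "S \<subseteq> V"
  shows "fp V (complete_graph V) (\<lambda>_. c) (\<pi> ` S) \<delta> = fp V (complete_graph V) (\<lambda>_. c) S \<delta>"
  by (rule fp_automorphism[OF automorphism_complete_graph[OF assms(1)] _ assms(2)])
    (auto simp: complete_graph_def)

lemma fp_complete_graph_with_loops_relabel:
  assumes "bij_betw \<pi> V V" and "S \<subseteq> V"
  shows "fp V (complete_graph_with_loops V) (\<lambda>_. c) (\<pi> ` S) \<delta> =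
    fp V (complete_graph_with_loops V) (\<lambda>_. c) S \<delta>"
  by (rule fp_automorphism[OF automorphism_complete_graph_with_loops[OF assms(1)] _ assms(2)])
    (simp add: complete_graph_with_loops_def)

text \<open>Simplification must keep the vertex label 1 as a numeral, or the lemmas about the
  triangle below no longer match.\<close>
declare One_nat_def [simp del]

definition triangle_fun :: "real \<Rightarrow> real \<Rightarrow> real \<Rightarrow> real \<Rightarrow> real \<Rightarrow> real \<Rightarrow> nat set \<Rightarrow> real" where
  "triangle_fun a b c ab ac bc X =
     (if 0 \<in> X then (if 1 \<in> X then (if 2 \<in> X then 1 else ab) else (if 2 \<in> X then ac else a))
      else (if 1 \<in> X then (if 2 \<in> X then bc else b) else (if 2 \<in> X then c else 0)))"

lemma transient_subsets_triangle:
  assumes "X \<subseteq> {0, 1, 2 :: nat}" and "X \<noteq> {}" and "X \<noteq> {0, 1, 2}"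
  shows "X \<in> {{0}, {1}, {2}, {0, 1}, {0, 2}, {1, 2}}"
proof -
  have "X \<in> Pow {0, 1, 2}"
    using assms(1) by simp
  with assms(2,3) show ?thesis
    by (simp add: Pow_insert insert_commute)
qed

text \<open>Transience is expressed as \<open>\<not> {0, 1, 2} \<subseteq> Y\<close> rather than \<open>Y \<noteq> {0, 1, 2}\<close> because
  the simplifier decides the former for explicit finite sets.\<close>
lemma fp_triangle_eqI:
  fixes a b c ab ac bc q \<delta> :: real
  defines "h \<equiv> triangle_fun a b c ab ac bc"
  assumes "E \<subseteq> {0, 1, 2} \<times> {0, 1, 2}" and "0 \<le> \<delta>" and "0 \<le> q" and "q < 1"
    and "\<forall>X \<in> {{0}, {1}, {2}, {0, 1}, {0, 2}, {1, 2}}.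
      h X = voter_step {0, 1, 2} E (\<lambda>_. 1) S \<delta> h X \<and>
      voter_step {0, 1, 2} E (\<lambda>_. 1) S \<delta> (\<lambda>Y. of_bool (Y \<noteq> {} \<and> \<not> {0, 1, 2} \<subseteq> Y)) X \<le> q"
  shows "fp {0, 1, 2} E (\<lambda>_. 1) S \<delta> = (a + b + c) / 3"
proof -
  have transient: "of_bool (Y \<noteq> {} \<and> Y \<noteq> {0, 1, 2}) = (of_bool (Y \<noteq> {} \<and> \<not> {0, 1, 2} \<subseteq> Y) :: real)"
    if "Y \<subseteq> {0, 1, 2}" for Y
    using that by auto
  have "fp_conf {0, 1, 2} E (\<lambda>_. 1) S \<delta> X = h X" if "X \<subseteq> {0, 1, 2}" for X
  proof (rule fp_conf_eqI[where q = q])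
    fix Y :: "nat set"
    assume "Y \<subseteq> {0, 1, 2}" and "Y \<noteq> {}" and "Y \<noteq> {0, 1, 2}"
    then have "Y \<in> {{0}, {1}, {2}, {0, 1}, {0, 2}, {1, 2}}"
      by (rule transient_subsets_triangle)
    with assms(6) have "h Y = voter_step {0, 1, 2} E (\<lambda>_. 1) S \<delta> h Y"
      and "voter_step {0, 1, 2} E (\<lambda>_. 1) S \<delta> (\<lambda>Y. of_bool (Y \<noteq> {} \<and> \<not> {0, 1, 2} \<subseteq> Y)) Y \<le> q"
      by blast+
    moreover have "voter_step {0, 1, 2} E (\<lambda>_. 1) S \<delta> (\<lambda>Y. of_bool (Y \<noteq> {} \<and> Y \<noteq> {0, 1, 2})) Y =
        voter_step {0, 1, 2} E (\<lambda>_. 1) S \<delta> (\<lambda>Y. of_bool (Y \<noteq> {} \<and> \<not> {0, 1, 2} \<subseteq> Y)) Y"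
      using \<open>Y \<subseteq> {0, 1, 2}\<close> transient by (rule voter_step_cong)
    ultimately show "h Y = voter_step {0, 1, 2} E (\<lambda>_. 1) S \<delta> h Y"
      and "voter_step {0, 1, 2} E (\<lambda>_. 1) S \<delta> (\<lambda>Y. of_bool (Y \<noteq> {} \<and> Y \<noteq> {0, 1, 2})) Y \<le> q"
      by simp_all
  qed (use assms(3-5) that in \<open>simp_all add: h_def triangle_fun_def\<close>)
  then show ?thesis
    by (simp add: fp_def h_def triangle_fun_def)
qed

lemma in_nbrs_triangle:
  "in_nbrs (complete_graph {0, 1, 2}) 0 = {1, 2 :: nat}"
  "in_nbrs (complete_graph {0, 1, 2}) 1 = {0, 2 :: nat}"
  "in_nbrs (complete_graph {0, 1, 2}) 2 = {0, 1 :: nat}"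
  by (auto simp: in_nbrs_def complete_graph_def)

lemma complete_graph_triangle: "complete_graph {0, 1, 2} \<subseteq> {0, 1, 2 :: nat} \<times> {0, 1, 2}"
  by (auto simp: complete_graph_def)

lemma complete_graph_with_loops_triangle:
  "complete_graph_with_loops {0, 1, 2} \<subseteq> {0, 1, 2 :: nat} \<times> {0, 1, 2}"
  by (simp add: complete_graph_with_loops_def)

lemmas triangle_step_simps =
  voter_step_def copy_prob_def fitness_def next_conf_def triangle_fun_def
  in_nbrs_triangle in_nbrs_complete_graph_with_loops

lemmas denominator_simps =
  order_less_imp_not_eq2[of 0] add_pos_nonneg mult_nonneg_nonneg add_nonneg_nonneg

text \<open>The values of the solutions below were obtained by solving the six first-step
  equations of each instance; the proofs only check them. From every transient
  configuration one update is absorbing with probability at least 1/3 (1/6 with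
  self-loops), hence the contraction factors 2/3 and 5/6.\<close>

lemma fp_triangle_empty:
  assumes "0 \<le> \<delta>"
  shows "fp {0, 1, 2} (complete_graph {0, 1, 2 :: nat}) (\<lambda>_. 1) {} \<delta> = 1 / 3"
proof -
  have "fp {0, 1, 2} (complete_graph {0, 1, 2 :: nat}) (\<lambda>_. 1) {} \<delta> = (1/3 + 1/3 + 1/3) / 3"
    by (rule fp_triangle_eqI[OF complete_graph_triangle, where q = "2/3"
          and ab = "2/3" and ac = "2/3" and bc = "2/3"])
      (use assms in \<open>simp_all add: triangle_step_simps\<close>)
  then show ?thesis
    by simp
qed

lemma fp_triangle_singleton:
  assumes "0 \<le> \<delta>"
  shows "fp {0, 1, 2} (complete_graph {0, 1, 2 :: nat}) (\<lambda>_. 1) {0} \<delta> =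
    (6 + 4 * \<delta>) / (18 + 9 * \<delta>)" (is "_ = ?rhs")
proof -
  let ?D = "15 * (2 + \<delta>)"
  have "fp {0, 1, 2} (complete_graph {0, 1, 2 :: nat}) (\<lambda>_. 1) {0} \<delta> =
      ((10 + 6 * \<delta>) / ?D + (10 + 7 * \<delta>) / ?D + (10 + 7 * \<delta>) / ?D) / 3"
    by (rule fp_triangle_eqI[OF complete_graph_triangle, where q = "2/3"
          and ab = "(20 + 12 * \<delta>) / ?D" and ac = "(20 + 12 * \<delta>) / ?D"
          and bc = "(20 + 11 * \<delta>) / ?D"])
      (use assms in \<open>simp_all add: triangle_step_simps,
        simp_all add: divide_simps denominator_simps, simp_all add: algebra_simps\<close>)
  also have "\<dots> = ?rhs"
    using assms by (simp add: field_simps denominator_simps)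
  finally show ?thesis .
qed

lemma fp_triangle_pair:
  assumes "0 \<le> \<delta>"
  shows "fp {0, 1, 2} (complete_graph {0, 1, 2 :: nat}) (\<lambda>_. 1) {0, 1} \<delta> =
    (30 + 40 * \<delta> + 12 * \<delta>\<^sup>2) / (90 + 90 * \<delta> + 21 * \<delta>\<^sup>2)" (is "_ = ?rhs")
proof -
  let ?D = "30 + 30 * \<delta> + 7 * \<delta>\<^sup>2"
  have "fp {0, 1, 2} (complete_graph {0, 1, 2 :: nat}) (\<lambda>_. 1) {0, 1} \<delta> =
      ((10 + 13 * \<delta> + 4 * \<delta>\<^sup>2) / ?D + (10 + 13 * \<delta> + 4 * \<delta>\<^sup>2) / ?D
        + (10 + 14 * \<delta> + 4 * \<delta>\<^sup>2) / ?D) / 3"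
    by (rule fp_triangle_eqI[OF complete_graph_triangle, where q = "2/3"
          and ab = "(20 + 24 * \<delta> + 7 * \<delta>\<^sup>2) / ?D" and ac = "(20 + 23 * \<delta> + 6 * \<delta>\<^sup>2) / ?D"
          and bc = "(20 + 23 * \<delta> + 6 * \<delta>\<^sup>2) / ?D"])
      (use assms in \<open>simp_all add: triangle_step_simps,
        simp_all add: divide_simps denominator_simps, simp_all add: algebra_simps power2_eq_square\<close>)
  also have "\<dots> = ?rhs"
    by (simp add: add_divide_distrib[symmetric] divide_divide_eq_left)
  finally show ?thesis .
qed

lemma fp_triangle_full:
  assumes "0 \<le> \<delta>"
  shows "fp {0, 1, 2} (complete_graph {0, 1, 2 :: nat}) (\<lambda>_. 1) {0, 1, 2} \<delta> =
    (2 + 2 * \<delta>) / (6 + 3 * \<delta>)" (is "_ = ?rhs")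
proof -
  let ?D = "6 + 3 * \<delta>"
  have "fp {0, 1, 2} (complete_graph {0, 1, 2 :: nat}) (\<lambda>_. 1) {0, 1, 2} \<delta> =
      ((2 + 2 * \<delta>) / ?D + (2 + 2 * \<delta>) / ?D + (2 + 2 * \<delta>) / ?D) / 3"
    by (rule fp_triangle_eqI[OF complete_graph_triangle, where q = "2/3"
          and ab = "(4 + 3 * \<delta>) / ?D" and ac = "(4 + 3 * \<delta>) / ?D" and bc = "(4 + 3 * \<delta>) / ?D"])
      (use assms in \<open>simp_all add: triangle_step_simps,
        simp_all add: divide_simps denominator_simps, simp_all add: algebra_simps\<close>)
  also have "\<dots> = ?rhs"
    using assms by (simp add: field_simps denominator_simps)
  finally show ?thesis .
qed

definition triangle_fp :: "nat \<Rightarrow> real \<Rightarrow> real" where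
  "triangle_fp k \<delta> =
     (if k = 0 then 1 / 3
      else if k = 1 then (6 + 4 * \<delta>) / (18 + 9 * \<delta>)
      else if k = 2 then (30 + 40 * \<delta> + 12 * \<delta>\<^sup>2) / (90 + 90 * \<delta> + 21 * \<delta>\<^sup>2)
      else (2 + 2 * \<delta>) / (6 + 3 * \<delta>))"

lemma fp_triangle:
  assumes "S \<subseteq> {0, 1, 2}" and "0 \<le> \<delta>"
  shows "fp {0, 1, 2} (complete_graph {0, 1, 2 :: nat}) (\<lambda>_. 1) S \<delta> = triangle_fp (card S) \<delta>"
proof -
  have relabel: "fp {0, 1, 2} (complete_graph {0, 1, 2}) (\<lambda>_. 1) (Transposition.transpose i j ` T) \<delta> =
      fp {0, 1, 2} (complete_graph {0, 1, 2 :: nat}) (\<lambda>_. 1) T \<delta>"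
    if "i \<in> {0, 1, 2}" and "j \<in> {0, 1, 2}" and "T \<subseteq> {0, 1, 2}" for i j T
    using that by (intro fp_complete_graph_relabel) simp_all
  have "S \<in> Pow {0, 1, 2}"
    using assms(1) by simp
  then consider "S = {}" | "S = {0}" | "S = {1}" | "S = {2}" | "S = {0, 1}" | "S = {0, 2}"
    | "S = {1, 2}" | "S = {0, 1, 2}"
    by (auto simp: Pow_insert insert_commute)
  then show ?thesis
  proof cases
    case 1
    then show ?thesis using fp_triangle_empty assms(2) by (simp add: triangle_fp_def)
  next
    case 2
    then show ?thesis using fp_triangle_singleton assms(2) by (simp add: triangle_fp_def)
  next
    case 3
    then show ?thesis
      using relabel[of 0 1 "{0}"] fp_triangle_singleton assms(2) by (simp add: triangle_fp_def)
  next
    case 4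
    then show ?thesis
      using relabel[of 0 2 "{0}"] fp_triangle_singleton assms(2) by (simp add: triangle_fp_def)
  next
    case 5
    then show ?thesis using fp_triangle_pair assms(2) by (simp add: triangle_fp_def)
  next
    case 6
    then show ?thesis
      using relabel[of 1 2 "{0, 1}"] fp_triangle_pair assms(2) by (simp add: triangle_fp_def insert_commute)
  next
    case 7
    then show ?thesis
      using relabel[of 0 2 "{0, 1}"] fp_triangle_pair assms(2) by (simp add: triangle_fp_def insert_commute)
  next
    case 8
    then show ?thesis using fp_triangle_full assms(2) by (simp add: triangle_fp_def)
  qed
qed

definition triangle_fp_limit :: "nat \<Rightarrow> real" where
  "triangle_fp_limit k = (if k = 0 then 1 / 3 else if k = 1 then 4 / 9 else if k = 2 then 4 / 7 else 2 / 3)"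

lemma triangle_fp_tendsto: "((\<lambda>\<delta>. triangle_fp k \<delta>) \<longlongrightarrow> triangle_fp_limit k) at_top"
proof -
  have "((\<lambda>\<delta>. (6 + 4 * \<delta>) / (18 + 9 * \<delta>)) \<longlongrightarrow> (4 / 9 :: real)) at_top"
    and "((\<lambda>\<delta>. (30 + 40 * \<delta> + 12 * \<delta>\<^sup>2) / (90 + 90 * \<delta> + 21 * \<delta>\<^sup>2)) \<longlongrightarrow> (4 / 7 :: real)) at_top"
    and "((\<lambda>\<delta>. (2 + 2 * \<delta>) / (6 + 3 * \<delta>)) \<longlongrightarrow> (2 / 3 :: real)) at_top"
    by real_asymp+
  moreover consider "k = 0" | "k = 1" | "k = 2" | "k \<noteq> 0 \<and> k \<noteq> 1 \<and> k \<noteq> 2"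
    by blast
  ultimately show ?thesis
    by cases (simp_all add: triangle_fp_def triangle_fp_limit_def)
qed

lemma fp_triangle_tendsto:
  assumes "S \<subseteq> {0, 1, 2}"
  shows "((\<lambda>\<delta>. fp {0, 1, 2} (complete_graph {0, 1, 2 :: nat}) (\<lambda>_. 1) S \<delta>)
    \<longlongrightarrow> triangle_fp_limit (card S)) at_top"
proof (rule Lim_transform_eventually[OF triangle_fp_tendsto])
  show "\<forall>\<^sub>F \<delta> in at_top. triangle_fp (card S) \<delta> = fp {0, 1, 2} (complete_graph {0, 1, 2}) (\<lambda>_. 1) S \<delta>"
    using eventually_ge_at_top[of "0 :: real"] by eventually_elim (simp add: fp_triangle assms)
qed

lemma fp_looped_triangle_empty:
  "fp {0, 1, 2} (complete_graph_with_loops {0, 1, 2 :: nat}) (\<lambda>_. 1) {} 1 = 1 / 3"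
proof -
  have "fp {0, 1, 2} (complete_graph_with_loops {0, 1, 2 :: nat}) (\<lambda>_. 1) {} 1 = (1/3 + 1/3 + 1/3) / 3"
    by (rule fp_triangle_eqI[OF complete_graph_with_loops_triangle, where q = "5/6"
          and ab = "2/3" and ac = "2/3" and bc = "2/3"])
      (simp_all add: triangle_step_simps)
  then show ?thesis
    by simp
qed

lemma fp_looped_triangle_singleton:
  assumes "i \<in> {0, 1, 2}"
  shows "fp {0, 1, 2} (complete_graph_with_loops {0, 1, 2 :: nat}) (\<lambda>_. 1) {i} 1 = 10868 / 26223"
proof -
  have "fp {0, 1, 2} (complete_graph_with_loops {0, 1, 2 :: nat}) (\<lambda>_. 1) {0} 1 =
      (3704 / 8741 + 3582 / 8741 + 3582 / 8741) / 3"
    by (rule fp_triangle_eqI[OF complete_graph_with_loops_triangle, where q = "5/6"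
          and ab = "6482 / 8741" and ac = "6482 / 8741" and bc = "6396 / 8741"])
      (simp_all add: triangle_step_simps)
  moreover have "fp {0, 1, 2} (complete_graph_with_loops {0, 1, 2 :: nat}) (\<lambda>_. 1) (Transposition.transpose 0 i ` {0}) 1 =
      fp {0, 1, 2} (complete_graph_with_loops {0, 1, 2 :: nat}) (\<lambda>_. 1) {0} 1"
    using assms by (intro fp_complete_graph_with_loops_relabel) simp_all
  ultimately show ?thesis
    by simp
qed

lemma fp_looped_triangle_pair:
  "fp {0, 1, 2} (complete_graph_with_loops {0, 1, 2 :: nat}) (\<lambda>_. 1) {0, 1} 1 = 457 / 921"
proof -
  have "fp {0, 1, 2} (complete_graph_with_loops {0, 1, 2 :: nat}) (\<lambda>_. 1) {0, 1} 1 =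
      (155 / 307 + 155 / 307 + 147 / 307) / 3"
    by (rule fp_triangle_eqI[OF complete_graph_with_loops_triangle, where q = "5/6"
          and ab = "250 / 307" and ac = "245 / 307" and bc = "245 / 307"])
      (simp_all add: triangle_step_simps)
  then show ?thesis
    by simp
qed

lemma not_submodular_onI:
  assumes "a \<in> V" and "b \<in> V" and "a \<noteq> b" and "f {a} + f {b} < f {a, b} + f {}"
  shows "\<not> submodular_on V f"
proof
  assume "submodular_on V f"
  then have "f ({a} \<union> {b}) + f ({a} \<inter> {b}) \<le> f {a} + f {b}"
    using assms(1,2) unfolding submodular_on_def by blast
  moreover have "{a} \<union> {b} = {a, b}" and "{a} \<inter> {b} = {}"
    using assms(3) by auto
  ultimately show False
    using assms(4) by simp
qed

lemma triangle_not_submodular: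
  "\<exists>(V :: nat set) E (\<delta> :: real). undirected_connected_graph V E \<and> \<delta> > 0 \<and>
     \<not> submodular_on V (\<lambda>S. fp V E (\<lambda>_. 1) S \<delta>)"
proof (intro exI conjI)
  show "undirected_connected_graph {0, 1, 2 :: nat} (complete_graph {0, 1, 2})"
    by (simp add: undirected_connected_complete_graph)
  show "\<not> submodular_on {0, 1, 2} (\<lambda>S. fp {0, 1, 2} (complete_graph {0, 1, 2 :: nat}) (\<lambda>_. 1) S 1)"
    by (rule not_submodular_onI[of 0 _ 1]) (simp_all add: fp_triangle triangle_fp_def)
qed simp

lemma looped_triangle_not_submodular:
  "\<exists>(V :: nat set) E (\<delta> :: real). undirected_connected_graph V E \<and> (\<forall>u\<in>V. (u, u) \<in> E) \<and>
     \<delta> > 0 \<and> \<not> submodular_on V (\<lambda>S. fp V E (\<lambda>_. 1) S \<delta>)"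
proof (intro exI conjI)
  show "undirected_connected_graph {0, 1, 2 :: nat} (complete_graph_with_loops {0, 1, 2})"
    by (simp add: undirected_connected_complete_graph_with_loops)
  show "\<forall>u\<in>{0, 1, 2}. (u, u) \<in> complete_graph_with_loops {0, 1, 2 :: nat}"
    by (simp add: complete_graph_with_loops_def)
  show "\<not> submodular_on {0, 1, 2} (\<lambda>S. fp {0, 1, 2} (complete_graph_with_loops {0, 1, 2 :: nat}) (\<lambda>_. 1) S 1)"
    by (rule not_submodular_onI[of 0 _ 1])
      (simp_all add: fp_looped_triangle_empty fp_looped_triangle_singleton fp_looped_triangle_pair)
qed simp

lemma triangle_limit_not_submodular:
  "\<exists>(V :: nat set) E (fpinf :: nat set \<Rightarrow> real). undirected_connected_graph V E \<and>
     (\<forall>S\<subseteq>V. ((\<lambda>\<delta>. fp V E (\<lambda>_. 1) S \<delta>) \<longlongrightarrow> fpinf S) at_top) \<and>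
     \<not> submodular_on V fpinf"
proof (intro exI conjI)
  show "undirected_connected_graph {0, 1, 2 :: nat} (complete_graph {0, 1, 2})"
    by (simp add: undirected_connected_complete_graph)
  show "\<forall>S\<subseteq>{0, 1, 2}. ((\<lambda>\<delta>. fp {0, 1, 2} (complete_graph {0, 1, 2 :: nat}) (\<lambda>_. 1) S \<delta>)
      \<longlongrightarrow> triangle_fp_limit (card S)) at_top"
    using fp_triangle_tendsto by blast
  show "\<not> submodular_on {0, 1, 2 :: nat} (\<lambda>S. triangle_fp_limit (card S))"
    by (rule not_submodular_onI[of 0 _ 1]) (simp_all add: triangle_fp_limit_def)
qed

theorem theorem3:
  shows "((\<exists>(V :: nat set) E (\<delta> :: real). undirected_connected_graph V E \<and> \<delta> > 0 \<and>
            \<not> submodular_on V (\<lambda>S. fp V E (\<lambda>_. 1) S \<delta>))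
        \<and> (\<exists>(V :: nat set) E (\<delta> :: real). undirected_connected_graph V E \<and> (\<forall>u\<in>V. (u, u) \<in> E)
            \<and> \<delta> > 0 \<and> \<not> submodular_on V (\<lambda>S. fp V E (\<lambda>_. 1) S \<delta>)))
       \<and> (\<exists>(V :: nat set) E (fpinf :: nat set \<Rightarrow> real). undirected_connected_graph V E \<and>
            (\<forall>S\<subseteq>V. ((\<lambda>\<delta>. fp V E (\<lambda>_. 1) S \<delta>) \<longlongrightarrow> fpinf S) at_top) \<and>
            \<not> submodular_on V fpinf)"
  using triangle_not_submodular looped_triangle_not_submodular triangle_limit_not_submodular
  by blast

end
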